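(* Let $(X,d,f)$ be a topological dynamical system ($(X,d)$ compact metric, $f:X\to X$ continuous), fix $\delta\in(0,1)$ and $\epsilon>0$, and let $\nu\in\mathscr M_{\rm inv}(X,f)$. Then for every integer $k\ge1$ there exist ergodic measures $m_{k,1},\dots,m_{k,s_k}\in\mathscr M_{\rm erg}(X,f)$ and positive rational numbers $a_{k,1},\dots,a_{k,s_k}$ with $\sum_j a_{k,j}=1$ such that $\nu_k=\sum_{j=1}^{s_k}a_{k,j}m_{k,j}$ satisfies \[ D(\nu,\nu_k)\le\frac1k\quad\text{and}\quad h^{Kat}_\nu(f,\epsilon)\le\sum_{j=1}^{s_k}a_{k,j}h^{Kat}_{m_{k,j}}(f,\epsilon). \]
   Context: $\mathscr M(X)$ is the set of Borel probability measures, $\mathscr M_{\rm inv}(X,f)$ the invariant and $\mathscr M_{\rm erg}(X,f)$ the ergodic ones. Fix a dense sequence $\{\varphi_i\}_{i\ge1}$ in $C(X)$ and let $D(\mu,\nu)=\sum_{i\ge1}\frac{|\int\varphi_id\mu-\int\varphi_id\nu|}{2^{i+1}\|\varphi_i\|}$. With $B_n(x,\epsilon)=\{y:\max_{0\le i<n}d(f^ix,f^iy)<\epsilon\}$, let $N^m(n,\epsilon,\delta)$ be the minimal number of Bowen balls $B_n(x,\epsilon)$ covering a set of $m$-measure larger than $1-\delta$. For ergodic $m$, $h^{Kat}_m(f,\epsilon)=\liminf_{n\to\infty}\frac1n\log N^m(n,\epsilon,\delta)$. For $\nu\in\mathscr M_{\rm inv}(X,f)$ with ergodic decomposition $\nu=\int_{\mathscr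 M_{\rm erg}(X,f)}m\,d\tau(m)$, $h^{Kat}_\nu(f,\epsilon)=\int h^{Kat}_m(f,\epsilon)\,d\tau(m)$. *)

theory Defs
  imports "HOL-Probability.Probability"
begin

text \<open>Ambient system: the compact metric space X is the whole type 'a
  (assumption compact UNIV), f :: 'a => 'a continuous.
  Borel probability measures = M with sets M = sets borel and prob_space M.\<close>

definition borel_prob :: "'a::metric_space measure \<Rightarrow> bool" where
  "borel_prob M \<longleftrightarrow> sets M = sets borel \<and> prob_space M"

definition invariant_meas :: "('a::metric_space \<Rightarrow> 'a) \<Rightarrow> 'a measure \<Rightarrow> bool" where
  "invariant_meas f M \<longleftrightarrow> borel_prob M \<and>
     (\<forall>A\<in>sets borel. emeasure M (f -` A) = emeasure M A)"

definition ergodic_meas :: "('a::metric_space \<Rightarrow> 'a) \<Rightarrow> 'a measure \<Rightarrow> bool" where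
  "ergodic_meas f M \<longleftrightarrow> invariant_meas f M \<and>
     (\<forall>A\<in>sets borel. f -` A = A \<longrightarrow> emeasure M A = 0 \<or> emeasure M A = 1)"

definition sup_norm :: "('a \<Rightarrow> real) \<Rightarrow> real" where
  "sup_norm g = (SUP x. \<bar>g x\<bar>)"

text \<open>The metric D built from a sequence phi; the paper's phi_i (i >= 1) is phi i here,
  the sum runs over i >= 1.\<close>
definition Dmet :: "(nat \<Rightarrow> 'a::metric_space \<Rightarrow> real) \<Rightarrow> 'a measure \<Rightarrow> 'a measure \<Rightarrow> real" where
  "Dmet phi \<mu> \<nu> = (\<Sum>i. \<bar>integral\<^sup>L \<mu> (phi (Suc i)) - integral\<^sup>L \<nu> (phi (Suc i))\<bar>
                          / (2 ^ (Suc i + 1) * sup_norm (phi (Suc i))))"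

definition bowen_ball :: "('a::metric_space \<Rightarrow> 'a) \<Rightarrow> nat \<Rightarrow> 'a \<Rightarrow> real \<Rightarrow> 'a set" where
  "bowen_ball f n x \<epsilon> = {y. \<forall>i<n. dist ((f ^^ i) x) ((f ^^ i) y) < \<epsilon>}"

definition N_cover :: "('a::metric_space \<Rightarrow> 'a) \<Rightarrow> 'a measure \<Rightarrow> nat \<Rightarrow> real \<Rightarrow> real \<Rightarrow> nat" where
  "N_cover f m n \<epsilon> \<delta> = (LEAST k. \<exists>C. finite C \<and> card C = k \<and>
        measure m (\<Union>x\<in>C. bowen_ball f n x \<epsilon>) > 1 - \<delta>)"

definition katok_erg :: "('a::metric_space \<Rightarrow> 'a) \<Rightarrow> real \<Rightarrow> real \<Rightarrow> 'a measure \<Rightarrow> ereal" where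
  "katok_erg f \<delta> \<epsilon> m = liminf (\<lambda>n. ereal (ln (real (N_cover f m n \<epsilon> \<delta>)) / real n))"

definition ergodic_decomposition ::
    "('a::metric_space \<Rightarrow> 'a) \<Rightarrow> 'a measure \<Rightarrow> 'a measure measure \<Rightarrow> bool" where
  "ergodic_decomposition f \<nu> \<tau> \<longleftrightarrow> prob_space \<tau> \<and> sets \<tau> = sets (prob_algebra borel) \<and>
     (AE m in \<tau>. ergodic_meas f m) \<and>
     (\<forall>A\<in>sets borel. emeasure \<nu> A = (\<integral>\<^sup>+ m. emeasure m A \<partial>\<tau>))"

definition katok_inv ::
    "('a::metric_space \<Rightarrow> 'a) \<Rightarrow> real \<Rightarrow> real \<Rightarrow> 'a measure measure \<Rightarrow> ennreal" where
  "katok_inv f \<delta> \<epsilon> \<tau> = (\<integral>\<^sup>+ m. e2ennreal (katok_erg f \<delta> \<epsilon> m) \<partial>\<tau>)"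

end

theory Submission
  imports Defs
begin

(* A Borel probability measure on X is covered by at most r^n Bowen balls B_n(x, eps), where r is
   the size of an eps/2-net, so all Katok entropies are bounded by log r.  Partition the space of
   measures into finitely many cells on which the first N test integrals oscillate by at most
   eta.  In each cell of positive tau-mass pick an ergodic measure at which a measurable minorant
   of the entropy is at least its tau-average over the cell.  The cell masses, perturbed to
   positive rationals by moving the rounding error onto the representative of largest entropy,
   are the weights: the test integrals of the combination stay eta-close to those of nu, and
   the weighted entropy does not decrease. *)

lemma bowen_balls_cover:
  fixes f :: "'a::metric_space \<Rightarrow> 'a"
  assumes cpt: "compact (UNIV :: 'a set)" and \<epsilon>: "\<epsilon> > 0"
  shows "\<exists>r::nat. \<forall>n. \<exists>C. finite C \<and> card C \<le> r ^ n \<and> (\<Union>x\<in>C. bowen_ball f n x \<epsilon>) = UNIV"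
proof -
  obtain Cc where Cc: "finite Cc" "(UNIV :: 'a set) \<subseteq> (\<Union>c\<in>Cc. ball c (\<epsilon>/2))"
    using compactE_image[OF cpt, of UNIV "\<lambda>x. ball x (\<epsilon>/2)"] \<epsilon>
    by (metis centre_in_ball half_gt_zero open_ball UN_I subsetI)
  have near: "\<exists>c. c \<in> Cc \<and> dist c y < \<epsilon>/2" for y
    using Cc(2) by (auto simp: subset_eq)
  show ?thesis
  proof (intro exI[of _ "card Cc"] allI)
    fix n
    define itin where
      "itin y = restrict (\<lambda>i. SOME c. c \<in> Cc \<and> dist c ((f ^^ i) y) < \<epsilon>/2) {..<n}" for y
    define C where "C = (\<lambda>w. SOME x. itin x = w) ` range itin"
    have itin: "itin y i \<in> Cc \<and> dist (itin y i) ((f ^^ i) y) < \<epsilon>/2" if "i < n" for y i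
      using someI_ex[OF near[of "(f ^^ i) y"]] that by (simp add: itin_def)
    have "itin y \<in> PiE {..<n} (\<lambda>_. Cc)" for y
      unfolding PiE_iff using itin[of _ y] by (simp add: itin_def)
    then have "range itin \<subseteq> PiE {..<n} (\<lambda>_. Cc)" by blast
    moreover have "finite (PiE {..<n} (\<lambda>_. Cc))" using Cc(1) by (simp add: finite_PiE)
    ultimately have "finite (range itin)" "card (range itin) \<le> card Cc ^ n"
      using card_mono[of "PiE {..<n} (\<lambda>_. Cc)" "range itin"] finite_subset by (auto simp: card_PiE)
    then have "finite C" "card C \<le> card Cc ^ n"
      unfolding C_def using card_image_le[of "range itin" "\<lambda>w. SOME x. itin x = w"] by (simp, linarith)
    moreover have "y \<in> (\<Union>x\<in>C. bowen_ball f n x \<epsilon>)" for y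
    proof -
      define x where "x = (SOME x. itin x = itin y)"
      have "itin x = itin y" unfolding x_def by (rule someI_ex) blast
      have "y \<in> bowen_ball f n x \<epsilon>"
        unfolding bowen_ball_def
      proof (intro CollectI allI impI)
        fix i assume "i < n"
        then have "dist (itin y i) ((f ^^ i) x) < \<epsilon>/2" "dist (itin y i) ((f ^^ i) y) < \<epsilon>/2"
          using itin[of i x] itin[of i y] \<open>itin x = itin y\<close> by auto
        then show "dist ((f ^^ i) x) ((f ^^ i) y) < \<epsilon>"
          by (rule dist_triangle_half_r)
      qed
      moreover have "x \<in> C" unfolding C_def x_def by blast
      ultimately show ?thesis by blast
    qed
    ultimately show "\<exists>C. finite C \<and> card C \<le> card Cc ^ n \<and> (\<Union>x\<in>C. bowen_ball f n x \<epsilon>) = UNIV"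
      by blast
  qed
qed

lemma N_cover_le_card:
  assumes "prob_space m" "sets m = sets borel" "\<delta> > 0"
    and C: "finite C" "(\<Union>x\<in>C. bowen_ball f n x \<epsilon>) = UNIV"
  shows "N_cover f m n \<epsilon> \<delta> \<le> card C"
proof -
  have "space m = UNIV" using assms(2) sets_eq_imp_space_eq[of m borel] by simp
  then have "measure m (\<Union>x\<in>C. bowen_ball f n x \<epsilon>) > 1 - \<delta>"
    using assms C prob_space.prob_space[of m] by simp
  then show ?thesis
    unfolding N_cover_def using C(1) by (intro Least_le) blast
qed

lemma katok_erg_uniform_bound:
  fixes f :: "'a::metric_space \<Rightarrow> 'a"
  assumes "compact (UNIV :: 'a set)" "\<epsilon> > 0" "\<delta> > 0"
  shows "\<exists>L\<ge>0. \<forall>m. prob_space m \<and> sets m = sets borel \<longrightarrow>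
           e2ennreal (katok_erg f \<delta> \<epsilon> m) \<le> ennreal L"
proof -
  obtain r :: nat where r: "\<And>n. \<exists>C. finite C \<and> card C \<le> r ^ n \<and> (\<Union>x\<in>C. bowen_ball f n x \<epsilon>) = UNIV"
    using bowen_balls_cover[OF assms(1,2), of f] by blast
  define L where "L = ln (real (max r 1))"
  have "e2ennreal (katok_erg f \<delta> \<epsilon> m) \<le> ennreal L"
    if m: "prob_space m" "sets m = sets borel" for m
  proof -
    have "ereal (ln (real (N_cover f m n \<epsilon> \<delta>)) / real n) \<le> ereal L" if "n \<ge> 1" for n
    proof -
      obtain C where C: "finite C" "card C \<le> r ^ n" "(\<Union>x\<in>C. bowen_ball f n x \<epsilon>) = UNIV"
        using r by blast
      have "N_cover f m n \<epsilon> \<delta> \<le> max r 1 ^ n"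
        using N_cover_le_card[OF m assms(3) C(1,3)] C(2) power_mono[of r "max r 1" n] by linarith
      then have le: "real (N_cover f m n \<epsilon> \<delta>) \<le> real (max r 1) ^ n"
        by (metis of_nat_le_iff of_nat_power)
      then have "ln (real (N_cover f m n \<epsilon> \<delta>)) \<le> real n * L"
      proof (cases "N_cover f m n \<epsilon> \<delta> = 0")
        case False
        then have "ln (real (N_cover f m n \<epsilon> \<delta>)) \<le> ln (real (max r 1) ^ n)"
          using le by (subst ln_le_cancel_iff) auto
        then show ?thesis by (simp add: L_def ln_realpow)
      qed (simp add: L_def)
      then show ?thesis
        using that by (simp add: divide_le_eq mult.commute)
    qed
    then have "katok_erg f \<delta> \<epsilon> m \<le> ereal L"
      unfolding katok_erg_def
      by (intro order_trans[OF Liminf_le_Limsup Limsup_bounded] eventually_sequentiallyI) auto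
    then show ?thesis
      using e2ennreal_mono by fastforce
  qed
  then show ?thesis
    by (intro exI[of _ L]) (auto simp: L_def)
qed

(* Katok entropy need not be measurable in the measure, so katok_inv is an upper integral. *)
lemma nn_integral_measurable_minorant:
  fixes h :: "'b \<Rightarrow> ennreal"
  shows "\<exists>u. u \<in> borel_measurable M \<and> (\<forall>x. u x \<le> h x) \<and> integral\<^sup>N M h \<le> integral\<^sup>N M u"
proof -
  define G where "G = {g. simple_function M g \<and> g \<le> h}"
  have "integral\<^sup>S M ` G \<noteq> {}" unfolding G_def by (auto simp: le_fun_def)
  from ennreal_Sup_countable_SUP[OF this] obtain F
    where "incseq F" and F: "range F \<subseteq> integral\<^sup>S M ` G" "Sup (integral\<^sup>S M ` G) = Sup (range F)"
    by blast
  have "\<forall>n. \<exists>g\<in>G. F n = integral\<^sup>S M g" using F(1) by blast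
  then obtain g where g: "\<And>n. g n \<in> G" "\<And>n. F n = integral\<^sup>S M (g n)" by metis
  define u where "u x = (SUP n. g n x)" for x
  have gs: "simple_function M (g n)" and gh: "\<And>x. g n x \<le> h x" for n
    using g(1)[of n] unfolding G_def by (auto simp: le_fun_def)
  have "u \<in> borel_measurable M"
    unfolding u_def using gs by (intro borel_measurable_SUP) (auto intro: borel_measurable_simple_function)
  moreover have "\<forall>x. u x \<le> h x" unfolding u_def using gh by (auto intro: SUP_least)
  moreover have "integral\<^sup>N M h \<le> integral\<^sup>N M u"
  proof -
    have "integral\<^sup>N M h = Sup (range F)" unfolding nn_integral_def G_def[symmetric] using F(2) by simp
    also have "\<dots> \<le> integral\<^sup>N M u"
    proof (rule SUP_least)
      fix n
      have "F n = integral\<^sup>N M (g n)" using g(2)[of n] gs[of n] by (simp add: nn_integral_eq_simple_integral)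
      also have "\<dots> \<le> integral\<^sup>N M u" unfolding u_def by (intro nn_integral_mono) (auto intro: SUP_upper)
      finally show "F n \<le> integral\<^sup>N M u" .
    qed
    finally show ?thesis .
  qed
  ultimately show ?thesis by blast
qed

lemma prob_partition_sum:
  fixes P :: "'v \<Rightarrow> 'b set"
  assumes "prob_space M" and V: "finite V" "disjoint_family_on P V" "(\<Union>v\<in>V. P v) = space M"
    "\<And>v. v \<in> V \<Longrightarrow> P v \<in> sets M"
  shows "(\<Sum>v\<in>V. measure M (P v)) = 1"
proof -
  interpret prob_space M by fact
  have "(\<Sum>v\<in>V. measure M (P v)) = measure M (\<Union>v\<in>V. P v)"
    using V by (intro finite_measure_finite_Union[symmetric]) auto
  then show ?thesis using V(3) by (simp add: prob_space)
qed

lemma partition_small_oscillation: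
  fixes G :: "nat \<Rightarrow> 'b \<Rightarrow> real"
  assumes G: "\<And>i. G i \<in> borel_measurable M"
    and Gc: "\<And>i x. x \<in> space M \<Longrightarrow> \<bar>G i x\<bar> \<le> c i" and \<eta>: "\<eta> > 0"
  shows "\<exists>V :: (nat \<Rightarrow> int) set. \<exists>P. finite V \<and> disjoint_family_on P V \<and>
    (\<Union>v\<in>V. P v) = space M \<and> (\<forall>v\<in>V. P v \<in> sets M) \<and>
    (\<forall>v\<in>V. \<forall>x\<in>P v. \<forall>y\<in>P v. \<forall>i<N. \<bar>G i x - G i y\<bar> \<le> \<eta> * c i)"
proof -
  define key where "key x = restrict (\<lambda>i. \<lfloor>G i x / (\<eta> * c i)\<rfloor>) {..<N}" for x
  define P where "P v = {x \<in> space M. key x = v}" for v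
  have "key x \<in> PiE {..<N} (\<lambda>_. {\<lfloor>- 1 / \<eta>\<rfloor>..\<lfloor>1 / \<eta>\<rfloor>})" if "x \<in> space M" for x
  proof -
    have "- 1 / \<eta> \<le> G i x / (\<eta> * c i) \<and> G i x / (\<eta> * c i) \<le> 1 / \<eta>" for i
      using Gc[OF that, of i] \<eta> by (cases "c i = 0") (auto simp: abs_le_iff field_simps)
    then show ?thesis
      by (auto simp: key_def intro!: floor_mono)
  qed
  then have "finite (key ` space M)"
    by (rule finite_subset[OF image_subsetI]) (auto intro!: finite_PiE)
  moreover have "P v \<in> sets M" for v
  proof -
    have "P v = {x \<in> space M. \<forall>i<N. \<lfloor>G i x / (\<eta> * c i)\<rfloor> = v i}" if "v \<in> extensional {..<N}"
      using that by (auto simp: P_def key_def extensional_def)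
    moreover have "P v = {}" if "v \<notin> extensional {..<N}"
      using that by (auto simp: P_def key_def)
    ultimately show ?thesis
      using G by (cases "v \<in> extensional {..<N}") auto
  qed
  moreover have "\<bar>G i x - G i y\<bar> \<le> \<eta> * c i" if "x \<in> P v" "y \<in> P v" "i < N" for x y v i
  proof (cases "c i = 0")
    case True
    then show ?thesis using that Gc[of x i] Gc[of y i] by (auto simp: P_def)
  next
    case False
    then have "c i > 0" using that Gc[of x i] by (auto simp: P_def)
    have "\<lfloor>G i x / (\<eta> * c i)\<rfloor> = \<lfloor>G i y / (\<eta> * c i)\<rfloor>"
      using that by (auto simp: P_def key_def dest: fun_cong[of _ _ i])
    then have "\<bar>G i x / (\<eta> * c i) - G i y / (\<eta> * c i)\<bar> < 1" by linarith
    then show ?thesis using \<open>c i > 0\<close> \<eta> by (simp add: diff_divide_distrib[symmetric] abs_mult field_simps)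
  qed
  ultimately show ?thesis
    by (intro exI[of _ "key ` space M"] exI[of _ P])
      (auto simp: disjoint_family_on_def P_def)
qed

lemma nn_integral_indicator_le_point:
  fixes u :: "'b \<Rightarrow> ennreal"
  assumes "finite_measure M" and u: "u \<in> borel_measurable M" and P: "P \<in> sets M"
    and pos: "measure M P > 0" and fin: "(\<integral>\<^sup>+x. u x * indicator P x \<partial>M) \<noteq> \<infinity>"
    and Q: "AE x in M. Q x"
  shows "\<exists>x\<in>P. Q x \<and> (\<integral>\<^sup>+x. u x * indicator P x \<partial>M) \<le> ennreal (measure M P) * u x"
proof (rule ccontr)
  interpret finite_measure M by fact
  define I where "I = (\<integral>\<^sup>+x. u x * indicator P x \<partial>M)"
  define avg where "avg = enn2real I / measure M P"
  have I: "I = ennreal (measure M P) * ennreal avg"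
    using fin pos by (simp add: I_def avg_def ennreal_mult[symmetric] less_top enn2real_nonneg)
  assume contra: "\<not> ?thesis"
  have below: "u x < ennreal avg" if "x \<in> P" "Q x" for x
  proof -
    have "ennreal (measure M P) * u x < I"
      using that contra by (auto simp: not_le I_def)
    then show ?thesis
      using I mult_left_mono[of "ennreal avg" "u x" "ennreal (measure M P)"] by (auto simp: not_less[symmetric])
  qed
  have "AE x in M. u x * indicator P x \<le> ennreal avg * indicator P x"
    using Q by eventually_elim (auto simp: indicator_def less_imp_le below)
  moreover have "\<not> (AE x in M. ennreal avg * indicator P x \<le> u x * indicator P x)"
  proof
    assume "AE x in M. ennreal avg * indicator P x \<le> u x * indicator P x"
    then have "AE x in M. x \<notin> P"
      using Q by eventually_elim (use below in \<open>fastforce simp: indicator_def not_less[symmetric] split: if_splits\<close>)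
    then have "emeasure M P = 0"
      using AE_iff_measurable[OF P, of "\<lambda>x. x \<notin> P"] sets.sets_into_space[OF P] by auto
    then show False using pos by (simp add: measure_def)
  qed
  ultimately have "I < (\<integral>\<^sup>+x. ennreal avg * indicator P x \<partial>M)"
    unfolding I_def using fin u P by (intro nn_integral_less) auto
  also have "\<dots> = I"
    using P I by (simp add: nn_integral_cmult_indicator emeasure_eq_measure mult.commute)
  finally show False by simp
qed

lemma abs_integral_indicator_le:
  fixes F :: "'b \<Rightarrow> real"
  assumes "finite_measure M" and F: "F \<in> borel_measurable M" and P: "P \<in> sets M"
    and Fd: "\<And>x. x \<in> P \<Longrightarrow> \<bar>F x\<bar> \<le> d" and FB: "\<And>x. x \<in> space M \<Longrightarrow> \<bar>F x\<bar> \<le> B"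
  shows "\<bar>\<integral>x. F x * indicator P x \<partial>M\<bar> \<le> d * measure M P"
proof -
  interpret finite_measure M by fact
  have int: "integrable M (\<lambda>x. F x * indicator P x)"
    by (rule integrable_const_bound[where B="max B 0"])
      (use F P FB in \<open>auto simp: indicator_def abs_mult intro!: AE_I2 le_max_iff_disj[THEN iffD2]\<close>)
  have intd: "integrable M (\<lambda>x. d * indicator P x)"
    using P by (simp add: emeasure_finite less_top[symmetric])
  have "\<bar>\<integral>x. F x * indicator P x \<partial>M\<bar> \<le> (\<integral>x. \<bar>F x * indicator P x\<bar> \<partial>M)"
    by (rule integral_abs_bound)
  also have "\<dots> \<le> (\<integral>x. d * indicator P x \<partial>M)"
    using int intd Fd by (intro integral_mono) (auto simp: indicator_def)
  also have "\<dots> = d * measure M P" using P by simp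
  finally show ?thesis .
qed

lemma integral_approx_by_partition:
  fixes G :: "'b \<Rightarrow> real" and P :: "'v \<Rightarrow> 'b set"
  assumes "prob_space M" and G: "G \<in> borel_measurable M" and GC: "\<And>x. x \<in> space M \<Longrightarrow> \<bar>G x\<bar> \<le> C"
    and V: "finite V" "disjoint_family_on P V" "(\<Union>v\<in>V. P v) = space M" "\<And>v. v \<in> V \<Longrightarrow> P v \<in> sets M"
    and W: "W \<subseteq> V" and null: "\<And>v. v \<in> V - W \<Longrightarrow> measure M (P v) = 0"
    and z: "\<And>v. v \<in> W \<Longrightarrow> z v \<in> P v"
    and osc: "\<And>v x. v \<in> W \<Longrightarrow> x \<in> P v \<Longrightarrow> \<bar>G x - G (z v)\<bar> \<le> \<eta>"
    and a: "(\<Sum>v\<in>W. \<bar>a v - measure M (P v)\<bar>) \<le> \<theta>"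
  shows "\<bar>(\<integral>x. G x \<partial>M) - (\<Sum>v\<in>W. a v * G (z v))\<bar> \<le> \<eta> + \<theta> * C"
proof -
  interpret prob_space M by fact
  define b where "b v = measure M (P v)" for v
  define E where "E v = (\<integral>x. (G x - G (z v)) * indicator (P v) x \<partial>M)" for v
  obtain x0 where "x0 \<in> space M" using not_empty by blast
  then have C0: "0 \<le> C" using GC[of x0] by linarith
  have Psp: "P v \<subseteq> space M" if "v \<in> V" for v using V(3) that by blast
  have zsp: "z v \<in> space M" if "v \<in> W" for v using z[OF that] Psp W that by blast
  have GP: "integrable M (\<lambda>x. G x * indicator (P v) x)" if "v \<in> V" for v
    using that V(4) G GC C0 by (intro integrable_const_bound[where B=C]) (auto simp: indicator_def abs_mult)
  have "(\<Sum>v\<in>W. b v) = 1"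
    using prob_partition_sum[OF \<open>prob_space M\<close> V] null W sum.mono_neutral_left[OF V(1) W, of b]
    by (simp add: b_def)
  have "(\<integral>x. G x \<partial>M) = (\<integral>x. (\<Sum>v\<in>V. G x * indicator (P v) x) \<partial>M)"
  proof (rule Bochner_Integration.integral_cong[OF refl])
    fix x assume "x \<in> space M"
    then obtain v where "v \<in> V" "x \<in> P v" using V(3) by blast
    then show "G x = (\<Sum>v\<in>V. G x * indicator (P v) x)"
      using sum_indicator_disjoint_family[OF V(2) _ V(1), of x v "\<lambda>_. G x"] by simp
  qed
  also have "\<dots> = (\<Sum>v\<in>V. \<integral>x. G x * indicator (P v) x \<partial>M)"
    using GP by (intro Bochner_Integration.integral_sum) auto
  also have "\<dots> = (\<Sum>v\<in>W. \<integral>x. G x * indicator (P v) x \<partial>M)"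
  proof (rule sum.mono_neutral_right[OF V(1) W], rule ballI)
    fix v assume v: "v \<in> V - W"
    have "\<bar>\<integral>x. G x * indicator (P v) x \<partial>M\<bar> \<le> C * measure M (P v)"
      using v V(4) G GC Psp by (intro abs_integral_indicator_le) (auto intro: finite_measure_axioms)
    then show "(\<integral>x. G x * indicator (P v) x \<partial>M) = 0" using null[OF v] by simp
  qed
  also have "\<dots> = (\<Sum>v\<in>W. E v + b v * G (z v))"
  proof (rule sum.cong[OF refl])
    fix v assume "v \<in> W"
    then have "E v = (\<integral>x. G x * indicator (P v) x \<partial>M) - (\<integral>x. G (z v) * indicator (P v) x \<partial>M)"
      unfolding E_def left_diff_distrib using W V(4)
      by (intro Bochner_Integration.integral_diff GP) (auto simp: emeasure_finite less_top[symmetric])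
    then show "(\<integral>x. G x * indicator (P v) x \<partial>M) = E v + b v * G (z v)"
      using Psp W \<open>v \<in> W\<close> by (auto simp: b_def Int_absorb2)
  qed
  finally have decomp: "(\<integral>x. G x \<partial>M) - (\<Sum>v\<in>W. a v * G (z v)) =
      (\<Sum>v\<in>W. E v) + (\<Sum>v\<in>W. (b v - a v) * G (z v))"
    by (simp add: sum.distrib sum_subtractf left_diff_distrib)
  have "\<bar>\<Sum>v\<in>W. E v\<bar> \<le> (\<Sum>v\<in>W. \<eta> * b v)"
  proof (rule order_trans[OF sum_abs sum_mono])
    fix v assume v: "v \<in> W"
    show "\<bar>E v\<bar> \<le> \<eta> * b v"
      unfolding E_def b_def using v W V(4) G zsp[OF v] GC osc
      by (intro abs_integral_indicator_le[where B="2 * C"]) (auto intro: finite_measure_axioms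
          simp: abs_le_iff dest!: GC)
  qed
  also have "\<dots> = \<eta>" using \<open>(\<Sum>v\<in>W. b v) = 1\<close> by (simp add: sum_distrib_left[symmetric])
  finally have errE: "\<bar>\<Sum>v\<in>W. E v\<bar> \<le> \<eta>" .
  have "\<bar>\<Sum>v\<in>W. (b v - a v) * G (z v)\<bar> \<le> (\<Sum>v\<in>W. \<bar>a v - b v\<bar> * C)"
  proof (rule order_trans[OF sum_abs sum_mono])
    fix v assume "v \<in> W"
    then show "\<bar>(b v - a v) * G (z v)\<bar> \<le> \<bar>a v - b v\<bar> * C"
      using GC[OF zsp] by (simp add: abs_mult abs_minus_commute mult_left_mono)
  qed
  also have "\<dots> \<le> \<theta> * C"
    using a C0 unfolding b_def sum_distrib_right[symmetric] by (rule mult_right_mono)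
  finally show ?thesis using decomp errE by linarith
qed

lemma nn_integral_le_sum_representatives:
  fixes u :: "'b \<Rightarrow> ennreal" and P :: "'v \<Rightarrow> 'b set"
  assumes "prob_space M" and u: "u \<in> borel_measurable M" and uL: "\<And>x. x \<in> space M \<Longrightarrow> u x \<le> ennreal L"
    and Q: "AE x in M. Q x"
    and V: "finite V" "disjoint_family_on P V" "(\<Union>v\<in>V. P v) = space M" "\<And>v. v \<in> V \<Longrightarrow> P v \<in> sets M"
  defines "W \<equiv> {v \<in> V. measure M (P v) > 0}"
  shows "\<exists>z. (\<forall>v\<in>W. z v \<in> P v \<and> Q (z v)) \<and>
    integral\<^sup>N M u \<le> (\<Sum>v\<in>W. ennreal (measure M (P v)) * u (z v))"
proof -
  interpret prob_space M by fact
  define I where "I v = (\<integral>\<^sup>+x. u x * indicator (P v) x \<partial>M)" for v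
  have I_le: "I v \<le> ennreal L * ennreal (measure M (P v))" if "v \<in> V" for v
  proof -
    have "I v \<le> (\<integral>\<^sup>+x. ennreal L * indicator (P v) x \<partial>M)"
      unfolding I_def using uL by (intro nn_integral_mono) (auto simp: indicator_def)
    then show ?thesis using V(4)[OF that] by (simp add: nn_integral_cmult_indicator emeasure_eq_measure)
  qed
  have "\<forall>v\<in>W. \<exists>x\<in>P v. Q x \<and> I v \<le> ennreal (measure M (P v)) * u x"
  proof
    fix v assume v: "v \<in> W"
    have "I v \<noteq> \<infinity>" using I_le[of v] v by (auto simp: W_def ennreal_mult_eq_top_iff top_unique simp flip: ennreal_mult)
    then show "\<exists>x\<in>P v. Q x \<and> I v \<le> ennreal (measure M (P v)) * u x"
      unfolding I_def using v V(4) u Q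
      by (intro nn_integral_indicator_le_point) (auto simp: W_def intro: finite_measure_axioms)
  qed
  then obtain z where z: "\<And>v. v \<in> W \<Longrightarrow> z v \<in> P v \<and> Q (z v) \<and> I v \<le> ennreal (measure M (P v)) * u (z v)"
    by metis
  have "integral\<^sup>N M u = (\<integral>\<^sup>+x. (\<Sum>v\<in>V. u x * indicator (P v) x) \<partial>M)"
  proof (rule nn_integral_cong)
    fix x assume "x \<in> space M"
    then obtain v where "v \<in> V" "x \<in> P v" using V(3) by blast
    then show "u x = (\<Sum>v\<in>V. u x * indicator (P v) x)"
      using sum_indicator_disjoint_family[OF V(2) _ V(1), of x v "\<lambda>_. u x"] by simp
  qed
  also have "\<dots> = (\<Sum>v\<in>V. I v)"
    unfolding I_def using u V(4) by (intro nn_integral_sum) auto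
  also have "\<dots> = (\<Sum>v\<in>W. I v)"
  proof (rule sum.mono_neutral_right[OF V(1)])
    show "\<forall>v\<in>V - W. I v = 0"
    proof
      fix v assume v: "v \<in> V - W"
      then have "measure M (P v) = 0" using measure_nonneg[of M "P v"] by (auto simp: W_def)
      then show "I v = 0" using I_le[of v] v by simp
    qed
  qed (auto simp: W_def)
  also have "\<dots> \<le> (\<Sum>v\<in>W. ennreal (measure M (P v)) * u (z v))"
    using z by (intro sum_mono) auto
  finally show ?thesis using z by blast
qed

lemma rational_weights_near:
  fixes b :: "'v \<Rightarrow> real"
  assumes fin: "finite S" and vs: "vs \<in> S" and b: "\<And>v. v \<in> S \<Longrightarrow> b v > 0" and bsum: "sum b S = 1"
    and \<eta>: "\<eta> > 0"
  shows "\<exists>a. (\<forall>v\<in>S. a v \<in> \<rat> \<and> a v > 0) \<and> sum a S = 1 \<and> (\<Sum>v\<in>S. \<bar>a v - b v\<bar>) \<le> \<eta> \<and>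
    (\<forall>v\<in>S - {vs}. a v \<le> b v)"
proof -
  define T where "T = S - {vs}"
  define e where "e = \<eta> / (2 * card S)"
  have cS: "card S > 0" using fin vs card_gt_0_iff by blast
  have e: "e > 0" unfolding e_def using \<eta> cS by simp
  have "\<forall>v\<in>T. \<exists>q\<in>\<rat>. max 0 (b v - e) < q \<and> q < b v"
    using b e by (intro ballI Rats_dense_in_real) (auto simp: T_def)
  then obtain q where "\<And>v. v \<in> T \<Longrightarrow> q v \<in> \<rat> \<and> max 0 (b v - e) < q v \<and> q v < b v"
    by metis
  then have q: "\<And>v. v \<in> T \<Longrightarrow> q v \<in> \<rat> \<and> 0 < q v \<and> b v - e < q v \<and> q v < b v"
    by simp
  define a where "a v = (if v = vs then 1 - sum q T else q v)" for v
  have split: "sum g S = g vs + sum g T" for g :: "'v \<Rightarrow> real"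
    unfolding T_def using fin vs by (simp add: sum.remove)
  have aT: "sum a T = sum q T" "(\<Sum>v\<in>T. \<bar>a v - b v\<bar>) = (\<Sum>v\<in>T. b v - q v)"
    by (intro sum.cong refl; use q in \<open>force simp: a_def T_def\<close>)+
  have gap: "a vs - b vs = (\<Sum>v\<in>T. b v - q v)"
    using bsum split[of b] by (simp add: a_def sum_subtractf)
  have gap_nonneg: "(\<Sum>v\<in>T. b v - q v) \<ge> 0" using q by (intro sum_nonneg) (auto simp: less_imp_le)
  have gap_le: "(\<Sum>v\<in>T. b v - q v) \<le> card S * e"
  proof -
    have "(\<Sum>v\<in>T. b v - q v) \<le> card T * e"
      using sum_mono[of T "\<lambda>v. b v - q v" "\<lambda>_. e"] q by fastforce
    also have "\<dots> \<le> card S * e" using e fin by (simp add: T_def card_Diff1_le)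
    finally show ?thesis .
  qed
  show ?thesis
  proof (intro exI conjI ballI)
    fix v assume v: "v \<in> S"
    show "a v \<in> \<rat>" using q v by (auto simp: a_def T_def intro!: Rats_diff Rats_sum)
    show "a v > 0" using q v gap gap_nonneg b[OF vs] by (auto simp: a_def T_def)
  next
    show "sum a S = 1" using split[of a] aT(1) by (simp add: a_def)
  next
    have "(\<Sum>v\<in>S. \<bar>a v - b v\<bar>) = 2 * (\<Sum>v\<in>T. b v - q v)"
      using split[of "\<lambda>v. \<bar>a v - b v\<bar>"] aT(2) gap gap_nonneg by simp
    also have "\<dots> \<le> \<eta>" using gap_le cS by (simp add: e_def)
    finally show "(\<Sum>v\<in>S. \<bar>a v - b v\<bar>) \<le> \<eta>" .
  next
    fix v assume "v \<in> S - {vs}"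
    then show "a v \<le> b v" using q by (auto simp: a_def T_def less_imp_le)
  qed
qed

lemma weighted_sum_le_of_mass_moved_to_max:
  fixes a b x :: "'v \<Rightarrow> real"
  assumes "finite S" "vs \<in> S" and max: "\<And>v. v \<in> S \<Longrightarrow> x v \<le> x vs"
    and moved: "\<And>v. v \<in> S - {vs} \<Longrightarrow> a v \<le> b v" and "sum a S = sum b S"
  shows "(\<Sum>v\<in>S. b v * x v) \<le> (\<Sum>v\<in>S. a v * x v)"
proof -
  have "(\<Sum>v\<in>S. a v * x v) - (\<Sum>v\<in>S. b v * x v) = (\<Sum>v\<in>S. (a v - b v) * (x v - x vs))"
    using assms(5) by (simp add: left_diff_distrib right_diff_distrib sum_subtractf sum_distrib_right[symmetric])
  also have "\<dots> \<ge> 0"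
  proof (rule sum_nonneg)
    fix v assume "v \<in> S"
    then show "(a v - b v) * (x v - x vs) \<ge> 0"
      using max[of v] moved[of v] by (cases "v = vs") (auto intro: mult_nonpos_nonpos)
  qed
  finally show ?thesis by simp
qed

lemma rational_weights_approx:
  fixes b x :: "'v \<Rightarrow> real"
  assumes fin: "finite S" and ne: "S \<noteq> {}" and b: "\<And>v. v \<in> S \<Longrightarrow> b v > 0" and bsum: "sum b S = 1"
    and \<eta>: "\<eta> > 0"
  shows "\<exists>a. (\<forall>v\<in>S. a v \<in> \<rat> \<and> a v > 0) \<and> sum a S = 1 \<and> (\<Sum>v\<in>S. \<bar>a v - b v\<bar>) \<le> \<eta> \<and>
    (\<Sum>v\<in>S. b v * x v) \<le> (\<Sum>v\<in>S. a v * x v)"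
proof -
  obtain vs where vs: "vs \<in> S" "\<And>v. v \<in> S \<Longrightarrow> x v \<le> x vs"
    using Max_in[of "x ` S"] fin ne by (metis (no_types, lifting) Max_ge finite_imageI image_iff image_is_empty)
  obtain a where a: "\<forall>v\<in>S. a v \<in> \<rat> \<and> a v > 0" "sum a S = 1" "(\<Sum>v\<in>S. \<bar>a v - b v\<bar>) \<le> \<eta>"
    "\<forall>v\<in>S - {vs}. a v \<le> b v"
    using rational_weights_near[OF fin vs(1) b bsum \<eta>] by blast
  then have "(\<Sum>v\<in>S. b v * x v) \<le> (\<Sum>v\<in>S. a v * x v)"
    using bsum vs a by (intro weighted_sum_le_of_mass_moved_to_max[OF fin vs(1)]) auto
  with a show ?thesis by blast
qed

lemma ennreal_weighted_sum_mono:
  fixes a b x :: "'v \<Rightarrow> real"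
  assumes "\<And>v. v \<in> S \<Longrightarrow> 0 \<le> a v" "\<And>v. v \<in> S \<Longrightarrow> 0 \<le> b v" "\<And>v. v \<in> S \<Longrightarrow> 0 \<le> x v"
    and "(\<Sum>v\<in>S. b v * x v) \<le> (\<Sum>v\<in>S. a v * x v)"
  shows "(\<Sum>v\<in>S. ennreal (b v) * ennreal (x v)) \<le> (\<Sum>v\<in>S. ennreal (a v) * ennreal (x v))"
proof -
  have "(\<Sum>v\<in>S. ennreal (w v) * ennreal (x v)) = ennreal (\<Sum>v\<in>S. w v * x v)"
    if "\<And>v. v \<in> S \<Longrightarrow> 0 \<le> w v" for w
    using that assms(3) by (simp add: ennreal_mult[symmetric] sum_ennreal)
  then show ?thesis using assms by (simp add: ennreal_leI)
qed

lemma rational_combination_approx_finite: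
  fixes M :: "'b measure" and G :: "nat \<Rightarrow> 'b \<Rightarrow> real" and h :: "'b \<Rightarrow> ennreal"
  assumes M: "prob_space M" and G: "\<And>i. G i \<in> borel_measurable M"
    and GC: "\<And>i x. x \<in> space M \<Longrightarrow> \<bar>G i x\<bar> \<le> c i"
    and hL: "\<And>x. x \<in> space M \<Longrightarrow> h x \<le> ennreal L" and Q: "AE x in M. Q x" and \<eta>: "\<eta> > 0"
  shows "\<exists>W :: (nat \<Rightarrow> int) set. \<exists>z a. finite W \<and>
    (\<forall>v\<in>W. z v \<in> space M \<and> Q (z v) \<and> a v \<in> \<rat> \<and> a v > 0) \<and> sum a W = 1 \<and>
    (\<forall>i<N. \<bar>(\<integral>x. G i x \<partial>M) - (\<Sum>v\<in>W. a v * G i (z v))\<bar> \<le> \<eta> * c i) \<and>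
    integral\<^sup>N M h \<le> (\<Sum>v\<in>W. ennreal (a v) * h (z v))"
proof -
  interpret prob_space M by fact
  have "\<exists>V :: (nat \<Rightarrow> int) set. \<exists>P. finite V \<and> disjoint_family_on P V \<and>
      (\<Union>v\<in>V. P v) = space M \<and> (\<forall>v\<in>V. P v \<in> sets M) \<and>
      (\<forall>v\<in>V. \<forall>x\<in>P v. \<forall>y\<in>P v. \<forall>i<N. \<bar>G i x - G i y\<bar> \<le> \<eta>/2 * c i)"
    using G GC half_gt_zero[OF \<eta>] by (rule partition_small_oscillation)
  then obtain V :: "(nat \<Rightarrow> int) set" and P where
    V: "finite V" "disjoint_family_on P V" "(\<Union>v\<in>V. P v) = space M" "\<forall>v\<in>V. P v \<in> sets M"
    and osc: "\<forall>v\<in>V. \<forall>x\<in>P v. \<forall>y\<in>P v. \<forall>i<N. \<bar>G i x - G i y\<bar> \<le> \<eta>/2 * c i"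
    by blast
  note V = V(1-3) V(4)[rule_format]
  obtain u where u: "u \<in> borel_measurable M" "\<And>x. u x \<le> h x" "integral\<^sup>N M h \<le> integral\<^sup>N M u"
    using nn_integral_measurable_minorant[of M h] by blast
  have uL: "u x \<le> ennreal L" if "x \<in> space M" for x using u(2)[of x] hL[OF that] by (rule order_trans)
  define b where "b v = measure M (P v)" for v
  define W where "W = {v \<in> V. b v > 0}"
  obtain z where z: "\<And>v. v \<in> W \<Longrightarrow> z v \<in> P v \<and> Q (z v)"
    and uW: "integral\<^sup>N M u \<le> (\<Sum>v\<in>W. ennreal (b v) * u (z v))"
    using nn_integral_le_sum_representatives[OF M u(1) uL Q V] unfolding W_def b_def by blast
  have W: "W \<subseteq> V" "finite W" using V(1) by (auto simp: W_def)
  have null: "b v = 0" if "v \<in> V - W" for v using that measure_nonneg[of M "P v"] by (auto simp: W_def b_def)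
  have bW: "sum b W = 1"
    using prob_partition_sum[OF M V] sum.mono_neutral_left[OF V(1) W(1), of b] null by (simp add: b_def)
  have zsp: "z v \<in> space M" if "v \<in> W" for v using z[OF that] V(3) W(1) that by blast
  define uz where "uz v = enn2real (u (z v))" for v
  have uz: "u (z v) = ennreal (uz v)" if "v \<in> W" for v
    using uL[OF zsp[OF that]] by (cases "u (z v)") (auto simp: uz_def top_unique)
  have "W \<noteq> {}" using bW by auto
  obtain a where a: "\<forall>v\<in>W. a v \<in> \<rat> \<and> a v > 0" "sum a W = 1" "(\<Sum>v\<in>W. \<bar>a v - b v\<bar>) \<le> \<eta>/2"
      "(\<Sum>v\<in>W. b v * uz v) \<le> (\<Sum>v\<in>W. a v * uz v)"
    using rational_weights_approx[OF W(2) \<open>W \<noteq> {}\<close> _ bW half_gt_zero[OF \<eta>], of uz]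
    unfolding W_def by blast
  have "\<bar>(\<integral>x. G i x \<partial>M) - (\<Sum>v\<in>W. a v * G i (z v))\<bar> \<le> \<eta> * c i" if "i < N" for i
  proof -
    have "\<bar>(\<integral>x. G i x \<partial>M) - (\<Sum>v\<in>W. a v * G i (z v))\<bar> \<le> \<eta>/2 * c i + \<eta>/2 * c i"
    proof (rule integral_approx_by_partition[OF M G[of i] GC[of _ i] V W(1)])
      show "measure M (P v) = 0" if "v \<in> V - W" for v using null[OF that] by (simp add: b_def)
      show "z v \<in> P v" if "v \<in> W" for v using z[OF that] by blast
      show "\<bar>G i x - G i (z v)\<bar> \<le> \<eta>/2 * c i" if "v \<in> W" "x \<in> P v" for v x
        using osc z[OF that(1)] W(1) that \<open>i < N\<close> by blast
      show "(\<Sum>v\<in>W. \<bar>a v - measure M (P v)\<bar>) \<le> \<eta>/2" using a(3) by (simp add: b_def)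
    qed
    then show ?thesis by simp
  qed
  moreover have "integral\<^sup>N M h \<le> (\<Sum>v\<in>W. ennreal (a v) * h (z v))"
  proof -
    have "(\<Sum>v\<in>W. ennreal (b v) * u (z v)) = (\<Sum>v\<in>W. ennreal (b v) * ennreal (uz v))"
      using uz by (intro sum.cong) auto
    then have "integral\<^sup>N M h \<le> (\<Sum>v\<in>W. ennreal (b v) * ennreal (uz v))"
      using u(3) uW by simp
    also have "\<dots> \<le> (\<Sum>v\<in>W. ennreal (a v) * ennreal (uz v))"
      using a(1,4) by (intro ennreal_weighted_sum_mono) (auto simp: b_def uz_def intro: less_imp_le)
    also have "\<dots> \<le> (\<Sum>v\<in>W. ennreal (a v) * h (z v))"
      using u(2) by (intro sum_mono mult_left_mono) (simp_all add: uz[symmetric])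
    finally show ?thesis .
  qed
  ultimately show ?thesis
    using W(2) a(1,2) z zsp by (intro exI[of _ W] exI[of _ z] exI[of _ a] conjI ballI) auto
qed

lemma rational_combination_approx:
  fixes M :: "'b measure" and G :: "nat \<Rightarrow> 'b \<Rightarrow> real" and h :: "'b \<Rightarrow> ennreal"
  assumes M: "prob_space M" and G: "\<And>i. G i \<in> borel_measurable M"
    and GC: "\<And>i x. x \<in> space M \<Longrightarrow> \<bar>G i x\<bar> \<le> c i"
    and hL: "\<And>x. x \<in> space M \<Longrightarrow> h x \<le> ennreal L" and Q: "AE x in M. Q x" and \<eta>: "\<eta> > 0"
  shows "\<exists>s::nat. \<exists>z a. (\<forall>j<s. z j \<in> space M \<and> Q (z j) \<and> a j \<in> \<rat> \<and> a j > 0) \<and> (\<Sum>j<s. a j) = 1 \<and>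
    (\<forall>i<N. \<bar>(\<integral>x. G i x \<partial>M) - (\<Sum>j<s. a j * G i (z j))\<bar> \<le> \<eta> * c i) \<and>
    integral\<^sup>N M h \<le> (\<Sum>j<s. ennreal (a j) * h (z j))"
proof -
  obtain W :: "(nat \<Rightarrow> int) set" and z a where W: "finite W"
    "\<forall>v\<in>W. z v \<in> space M \<and> Q (z v) \<and> a v \<in> \<rat> \<and> a v > 0" "sum a W = 1"
    "\<forall>i<N. \<bar>(\<integral>x. G i x \<partial>M) - (\<Sum>v\<in>W. a v * G i (z v))\<bar> \<le> \<eta> * c i"
    "integral\<^sup>N M h \<le> (\<Sum>v\<in>W. ennreal (a v) * h (z v))"
    using rational_combination_approx_finite[where G=G and h=h and N=N, OF M G GC hL Q \<eta>] by blast
  define s where "s = card W"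
  obtain e where e: "bij_betw e {..<s} W"
    using ex_bij_betw_nat_finite[OF W(1)] unfolding s_def atLeast0LessThan by blast
  have reindex: "(\<Sum>j<s. g (e j)) = sum g W" for g :: "_ \<Rightarrow> 'c::comm_monoid_add"
    by (rule sum.reindex_bij_betw[OF e])
  have "e j \<in> W" if "j < s" for j using bij_betwE[OF e] that by blast
  then have "\<forall>j<s. z (e j) \<in> space M \<and> Q (z (e j)) \<and> a (e j) \<in> \<rat> \<and> a (e j) > 0"
    using W(2) by blast
  moreover have "(\<Sum>j<s. a (e j)) = 1" using W(3) by (simp only: reindex)
  moreover have "\<forall>i<N. \<bar>(\<integral>x. G i x \<partial>M) - (\<Sum>j<s. a (e j) * G i (z (e j)))\<bar> \<le> \<eta> * c i"
    using W(4) reindex[of "\<lambda>v. a v * G _ (z v)"] by simp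
  moreover have "integral\<^sup>N M h \<le> (\<Sum>j<s. ennreal (a (e j)) * h (z (e j)))"
    using W(5) reindex[of "\<lambda>v. ennreal (a v) * h (z v)"] by simp
  ultimately show ?thesis
    by (intro exI[of _ s] exI[of _ "\<lambda>j. z (e j)"] exI[of _ "\<lambda>j. a (e j)"]) blast
qed

lemma abs_le_sup_norm:
  fixes g :: "'a::topological_space \<Rightarrow> real"
  assumes "compact (UNIV :: 'a set)" and "continuous_on UNIV g"
  shows "\<bar>g x\<bar> \<le> sup_norm g"
proof -
  have "bounded (range g)" using assms by (intro compact_imp_bounded compact_continuous_image)
  then have "bdd_above (range (\<lambda>x. \<bar>g x\<bar>))"
    unfolding bounded_real bdd_above_def by auto
  then show ?thesis unfolding sup_norm_def by (intro cSUP_upper) auto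
qed

lemma abs_integral_le_bound:
  fixes g :: "'a::topological_space \<Rightarrow> real"
  assumes "prob_space \<mu>" and "sets \<mu> = sets borel" and g: "g \<in> borel_measurable borel"
    and gc: "\<And>x. \<bar>g x\<bar> \<le> c"
  shows "\<bar>integral\<^sup>L \<mu> g\<bar> \<le> c"
proof -
  interpret prob_space \<mu> by fact
  have "g \<in> borel_measurable \<mu>" using g assms(2) by (simp cong: measurable_cong_sets)
  then have "integrable \<mu> g" using gc by (intro integrable_const_bound[where B=c]) auto
  have "\<bar>integral\<^sup>L \<mu> g\<bar> \<le> (\<integral>x. \<bar>g x\<bar> \<partial>\<mu>)" by (rule integral_abs_bound)
  also have "\<dots> \<le> (\<integral>x. c \<partial>\<mu>)" using \<open>integrable \<mu> g\<close> gc by (intro integral_mono) auto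
  also have "\<dots> = c" by (simp add: prob_space)
  finally show ?thesis .
qed

lemma suminf_le_geometric_prefix_tail:
  fixes t :: "nat \<Rightarrow> real"
  assumes t0: "\<And>i. 0 \<le> t i" and t1: "\<And>i. t i \<le> (1/2) ^ Suc i"
    and t2: "\<And>i. i < N \<Longrightarrow> t i \<le> \<epsilon> * (1/2) ^ Suc i" and \<epsilon>: "0 \<le> \<epsilon>"
  shows "suminf t \<le> \<epsilon> + (1/2) ^ N"
proof -
  have geo: "summable (\<lambda>i. (1/2::real) ^ Suc i)" "(\<Sum>i. (1/2::real) ^ Suc i) = 1"
    using power_half_series by (auto simp: sums_iff)
  have summ: "summable t"
    by (rule summable_comparison_test[of _ "\<lambda>i. (1/2::real) ^ Suc i"]) (use t0 t1 geo(1) in auto)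
  have "sum t {..<N} \<le> (\<Sum>i<N. \<epsilon> * (1/2) ^ Suc i)" using t2 by (intro sum_mono) auto
  also have "\<dots> = \<epsilon> * (\<Sum>i<N. (1/2::real) ^ Suc i)" by (simp add: sum_distrib_left)
  also have "\<dots> \<le> \<epsilon> * 1"
    using sum_le_suminf[OF geo(1), of "{..<N}"] geo(2) \<epsilon> by (intro mult_left_mono) auto
  finally have head: "sum t {..<N} \<le> \<epsilon>" by simp
  have "(\<Sum>i. t (i + N)) \<le> (\<Sum>i. (1/2) ^ N * (1/2::real) ^ Suc i)"
  proof (rule suminf_le)
    show "t (i + N) \<le> (1/2) ^ N * (1/2) ^ Suc i" for i
      using t1[of "i + N"] by (simp add: power_add mult.commute)
    show "summable (\<lambda>i. t (i + N))" using summ by (simp add: summable_iff_shift)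
    show "summable (\<lambda>i. (1/2::real) ^ N * (1/2) ^ Suc i)" using geo(1) by (rule summable_mult)
  qed
  also have "\<dots> = (1/2) ^ N" by (simp only: suminf_mult[OF geo(1)] geo(2) mult_1_right)
  finally have tail: "(\<Sum>i. t (i + N)) \<le> (1/2) ^ N" .
  show ?thesis
    using suminf_split_initial_segment[OF summ, of N] head tail by simp
qed

lemma dyadic_weighted_series_le:
  fixes c D :: "nat \<Rightarrow> real" and k N :: nat
  assumes c: "\<And>i. c i \<ge> 0" and all: "\<And>i. \<bar>D i\<bar> \<le> 2 * c i"
    and near: "\<And>i. i < N \<Longrightarrow> \<bar>D i\<bar> \<le> c i / k" and k: "k \<ge> 1" and N: "2 * k \<le> 2 ^ N"
  shows "(\<Sum>i. \<bar>D i\<bar> / (2 ^ (Suc i + 1) * c i)) \<le> 1 / k"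
proof -
  have term_le: "\<bar>D i\<bar> / (2 ^ (Suc i + 1) * c i) \<le> (d / 2) * (1/2) ^ Suc i"
    if "\<bar>D i\<bar> \<le> d * c i" "d \<ge> 0" for i d
  proof (cases "c i = 0")
    case False
    then have "\<bar>D i\<bar> / (2 ^ (Suc i + 1) * c i) \<le> (d * c i) / (2 ^ (Suc i + 1) * c i)"
      using that c[of i] by (intro divide_right_mono) auto
    also have "\<dots> = (d / 2) * (1/2) ^ Suc i" using False by (simp add: power_divide)
    finally show ?thesis .
  qed (use that in simp)
  have "(\<Sum>i. \<bar>D i\<bar> / (2 ^ (Suc i + 1) * c i)) \<le> 1 / (2 * k) + (1/2) ^ N"
  proof (rule suminf_le_geometric_prefix_tail)
    show "\<bar>D i\<bar> / (2 ^ (Suc i + 1) * c i) \<le> (1/2) ^ Suc i" for i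
      using term_le[of i 2] all[of i] by simp
    show "\<bar>D i\<bar> / (2 ^ (Suc i + 1) * c i) \<le> 1 / (2 * k) * (1/2) ^ Suc i" if "i < N" for i
      using term_le[of i "1 / k"] near[OF that] by (simp add: mult.commute)
  qed (use c in auto)
  also have "(1/2::real) ^ N \<le> 1 / (2 * k)"
  proof -
    have "real (2 * k) \<le> 2 ^ N" using N by (metis of_nat_le_iff of_nat_numeral of_nat_power)
    then show ?thesis using k by (simp add: power_divide field_simps)
  qed
  finally show ?thesis by simp
qed

lemma integral_mixture:
  fixes g :: "'a::topological_space \<Rightarrow> real"
  assumes \<tau>: "prob_space \<tau>" "sets \<tau> = sets (prob_algebra borel)"
    and \<nu>: "sets \<nu> = sets borel" "\<And>A. A \<in> sets borel \<Longrightarrow> emeasure \<nu> A = (\<integral>\<^sup>+m. emeasure m A \<partial>\<tau>)"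
    and g: "g \<in> borel_measurable borel" "\<And>x. \<bar>g x\<bar> \<le> B"
  shows "(\<lambda>m. integral\<^sup>L m g) \<in> borel_measurable \<tau>" and "integral\<^sup>L \<nu> g = (\<integral>m. integral\<^sup>L m g \<partial>\<tau>)"
proof -
  interpret prob_space \<tau> by fact
  have id: "(\<lambda>m. m) \<in> \<tau> \<rightarrow>\<^sub>M subprob_algebra borel"
    using \<tau>(2) by (intro measurable_prob_algebraD measurable_ident_sets)
  show "(\<lambda>m. integral\<^sup>L m g) \<in> borel_measurable \<tau>"
    using measurable_comp[OF id integral_measurable_subprob_algebra[OF g(1)]] by (simp add: comp_def)
  have "sets m = sets borel" if "m \<in> space \<tau>" for m
    using that sets_eq_imp_space_eq[OF \<tau>(2)] by (simp add: space_prob_algebra)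
  then have "\<nu> = \<tau> \<bind> (\<lambda>m. m)"
  proof (intro measure_eqI)
    show "sets \<nu> = sets (\<tau> \<bind> (\<lambda>m. m))"
      using \<nu>(1) not_empty by (simp add: \<open>\<And>m. m \<in> space \<tau> \<Longrightarrow> sets m = sets borel\<close>)
    fix A assume "A \<in> sets \<nu>"
    then show "emeasure \<nu> A = emeasure (\<tau> \<bind> (\<lambda>m. m)) A"
      using \<nu> id not_empty by (simp add: emeasure_bind)
  qed
  also have "integral\<^sup>L \<dots> g = (\<integral>m. integral\<^sup>L m g \<partial>\<tau>)"
    using g id by (intro integral_bind[where B'=1]) (auto intro!: AE_I2 finite_measure_axioms
        simp: space_subprob_algebra subprob_space.subprob_emeasure_le_1 dest!: measurable_space[OF id])
  finally show "integral\<^sup>L \<nu> g = (\<integral>m. integral\<^sup>L m g \<partial>\<tau>)" .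
qed

lemma convex_combination_measure:
  fixes m :: "nat \<Rightarrow> 'a::metric_space measure" and a :: "nat \<Rightarrow> real"
  assumes m: "\<And>j. j < s \<Longrightarrow> m j \<in> space (prob_algebra borel)" and a0: "\<And>j. j < s \<Longrightarrow> a j \<ge> 0"
    and a1: "(\<Sum>j<s. a j) = 1"
  shows "\<exists>\<mu>. borel_prob \<mu> \<and> (\<forall>A\<in>sets borel. emeasure \<mu> A = (\<Sum>j<s. ennreal (a j) * emeasure (m j) A))
     \<and> (\<forall>g B. g \<in> borel_measurable borel \<longrightarrow> (\<forall>x. \<bar>g x\<bar> \<le> B) \<longrightarrow>
          integral\<^sup>L \<mu> g = (\<Sum>j<s. a j * integral\<^sup>L (m j) g))"
proof -
  define w where "w j = (if j < s then a j else 0)" for j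
  have w0: "0 \<le> w j" for j using a0 by (simp add: w_def)
  have "(\<integral>\<^sup>+j. ennreal (w j) \<partial>count_space UNIV) = (\<Sum>j. ennreal (w j))"
    by (rule nn_integral_count_space_nat)
  also have "\<dots> = (\<Sum>j<s. ennreal (w j))" by (rule suminf_finite) (auto simp: w_def)
  also have "\<dots> = ennreal (\<Sum>j<s. w j)" using w0 by (simp add: sum_ennreal)
  finally have w1: "(\<integral>\<^sup>+j. ennreal (w j) \<partial>count_space UNIV) = 1" using a1 by (simp add: w_def)
  define p where "p = embed_pmf w"
  have pmf: "pmf p j = w j" for j unfolding p_def by (rule pmf_embed_pmf[OF w0 w1])
  have set_p: "set_pmf p \<subseteq> {..<s}" by (auto simp: set_pmf_iff pmf w_def split: if_splits)
  have "s > 0" using a1 by (cases s) auto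
  define m' where "m' j = m (if j < s then j else 0)" for j
  have m'_eq: "(\<Sum>j<s. F j (m' j)) = (\<Sum>j<s. F j (m j))" for F :: "nat \<Rightarrow> 'a measure \<Rightarrow> 'c::comm_monoid_add"
    by (intro sum.cong) (auto simp: m'_def)
  have mp: "m' \<in> measure_pmf p \<rightarrow>\<^sub>M prob_algebra borel" using m \<open>s > 0\<close> by (simp add: m'_def)
  have pp: "measure_pmf p \<in> space (prob_algebra (measure_pmf p))"
    by (simp add: space_prob_algebra measure_pmf.prob_space_axioms)
  define \<mu> where "\<mu> = measure_pmf p \<bind> m'"
  have "borel_prob \<mu>"
    unfolding borel_prob_def \<mu>_def using sets_bind'[OF pp mp] prob_space_bind'[OF pp mp] by simp
  moreover have "emeasure \<mu> A = (\<Sum>j<s. ennreal (a j) * emeasure (m j) A)" if "A \<in> sets borel" for A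
  proof -
    have "emeasure \<mu> A = (\<Sum>j\<in>{..<s}. emeasure (m' j) A * pmf p j)"
      unfolding \<mu>_def emeasure_bind_prob_algebra[OF pp mp that]
      using set_p by (intro nn_integral_measure_pmf_support) auto
    then show ?thesis using m'_eq[of "\<lambda>j M. ennreal (a j) * emeasure M A"] by (simp add: pmf w_def mult.commute)
  qed
  moreover have "integral\<^sup>L \<mu> g = (\<Sum>j<s. a j * integral\<^sup>L (m j) g)"
    if g: "g \<in> borel_measurable borel" "\<forall>x. \<bar>g x\<bar> \<le> B" for g :: "'a \<Rightarrow> real" and B
  proof -
    have "integral\<^sup>L \<mu> g = (\<integral>j. integral\<^sup>L (m' j) g \<partial>measure_pmf p)"
      unfolding \<mu>_def using g measurable_space[OF mp] measurable_prob_algebraD[OF mp]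
      by (intro integral_bind[where B'=1])
        (auto intro!: AE_I2 simp: space_prob_algebra prob_space.emeasure_space_1 measure_pmf.finite_measure_axioms)
    also have "\<dots> = (\<Sum>j\<in>{..<s}. pmf p j *\<^sub>R integral\<^sup>L (m' j) g)"
      using set_p by (intro integral_measure_pmf) auto
    finally show ?thesis using m'_eq[of "\<lambda>j M. a j * integral\<^sup>L M g"] by (simp add: pmf w_def)
  qed
  ultimately show ?thesis by blast
qed

lemma ergodic_rational_combination_approx:
  fixes f :: "'a::metric_space \<Rightarrow> 'a" and g :: "nat \<Rightarrow> 'a \<Rightarrow> real"
  assumes cpt: "compact (UNIV :: 'a set)" and g: "\<And>i. continuous_on UNIV (g i)"
    and "0 < \<delta>" "0 < \<epsilon>" and \<nu>: "sets \<nu> = sets borel" and dec: "ergodic_decomposition f \<nu> \<tau>"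
    and \<eta>: "\<eta> > 0"
  shows "\<exists>s::nat. \<exists>m a. (\<forall>j<s. m j \<in> space (prob_algebra borel) \<and> ergodic_meas f (m j) \<and>
      a j \<in> \<rat> \<and> a j > 0) \<and> (\<Sum>j<s. a j) = 1 \<and>
    (\<forall>i<N. \<bar>integral\<^sup>L \<nu> (g i) - (\<Sum>j<s. a j * integral\<^sup>L (m j) (g i))\<bar> \<le> \<eta> * sup_norm (g i)) \<and>
    katok_inv f \<delta> \<epsilon> \<tau> \<le> (\<Sum>j<s. ennreal (a j) * e2ennreal (katok_erg f \<delta> \<epsilon> (m j)))"
proof -
  have \<tau>: "prob_space \<tau>" "sets \<tau> = sets (prob_algebra borel)" "AE m in \<tau>. ergodic_meas f m"
    and \<nu>_eq: "\<And>A. A \<in> sets borel \<Longrightarrow> emeasure \<nu> A = (\<integral>\<^sup>+m. emeasure m A \<partial>\<tau>)"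
    using dec by (auto simp: ergodic_decomposition_def)
  have space_\<tau>: "space \<tau> = space (prob_algebra borel)" using \<tau>(2) by (rule sets_eq_imp_space_eq)
  define I where "I i m = integral\<^sup>L m (g i)" for i and m :: "'a measure"
  have gb: "g i \<in> borel_measurable borel" "\<And>x. \<bar>g i x\<bar> \<le> sup_norm (g i)" for i
    using cpt g by (auto intro: borel_measurable_continuous_onI abs_le_sup_norm)
  have I_le: "\<bar>I i m\<bar> \<le> sup_norm (g i)" if "m \<in> space \<tau>" for i m
    unfolding I_def using that gb by (intro abs_integral_le_bound) (auto simp: space_\<tau> space_prob_algebra)
  have I_meas: "I i \<in> borel_measurable \<tau>" and \<nu>_I: "I i \<nu> = (\<integral>m. I i m \<partial>\<tau>)" for i
    using integral_mixture[OF \<tau>(1,2) \<nu> \<nu>_eq gb(1)[of i] gb(2)] unfolding I_def by auto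
  obtain L where L: "\<And>m. m \<in> space \<tau> \<Longrightarrow> e2ennreal (katok_erg f \<delta> \<epsilon> m) \<le> ennreal L"
    using katok_erg_uniform_bound[OF cpt assms(4,3)] unfolding space_\<tau> space_prob_algebra by blast
  show ?thesis
    using rational_combination_approx[where G=I and h="\<lambda>m. e2ennreal (katok_erg f \<delta> \<epsilon> m)"
        and N=N, OF \<tau>(1) I_meas I_le L \<tau>(3) \<eta>]
    unfolding katok_inv_def space_\<tau> \<nu>_I[symmetric] unfolding I_def .
qed

lemma Dmet_le_inverse:
  fixes phi :: "nat \<Rightarrow> 'a::metric_space \<Rightarrow> real" and k N :: nat
  assumes cpt: "compact (UNIV :: 'a set)" and phi: "\<And>i. continuous_on UNIV (phi i)"
    and \<mu>: "borel_prob \<mu>" "borel_prob \<mu>'" and k: "k \<ge> 1" and N: "2 * k \<le> 2 ^ N"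
    and close: "\<And>i. i < N \<Longrightarrow>
      \<bar>integral\<^sup>L \<mu> (phi (Suc i)) - integral\<^sup>L \<mu>' (phi (Suc i))\<bar> \<le> sup_norm (phi (Suc i)) / k"
  shows "Dmet phi \<mu> \<mu>' \<le> 1 / k"
  unfolding Dmet_def
proof (rule dyadic_weighted_series_le[OF _ _ close k N])
  have phi_le: "\<bar>phi i x\<bar> \<le> sup_norm (phi i)" for i x by (rule abs_le_sup_norm[OF cpt phi])
  then show "0 \<le> sup_norm (phi (Suc i))" for i by (rule order_trans[OF abs_ge_zero])
  have int_le: "\<bar>integral\<^sup>L \<mu>'' (phi (Suc i))\<bar> \<le> sup_norm (phi (Suc i))" if "borel_prob \<mu>''" for \<mu>'' i
    using that phi_le cpt phi
    by (intro abs_integral_le_bound) (auto simp: borel_prob_def intro: borel_measurable_continuous_onI)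
  show "\<bar>integral\<^sup>L \<mu> (phi (Suc i)) - integral\<^sup>L \<mu>' (phi (Suc i))\<bar> \<le> 2 * sup_norm (phi (Suc i))" for i
    using int_le[OF \<mu>(1), of i] int_le[OF \<mu>(2), of i] by linarith
qed

theorem lemma4p4:
  fixes f :: "'a::metric_space \<Rightarrow> 'a"
    and phi :: "nat \<Rightarrow> 'a \<Rightarrow> real"
    and \<delta> \<epsilon> :: real
    and \<nu> :: "'a measure" and \<tau> :: "'a measure measure"
  assumes "compact (UNIV :: 'a set)"
    and "continuous_on UNIV f"
    and "\<And>i. continuous_on UNIV (phi i)"
    and "\<And>g e. continuous_on UNIV g \<Longrightarrow> e > 0 \<Longrightarrow>
           \<exists>i\<ge>1. \<forall>x. \<bar>g x - phi i x\<bar> < e"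
    and "0 < \<delta>" "\<delta> < 1" "0 < \<epsilon>"
    and "invariant_meas f \<nu>"
    and "ergodic_decomposition f \<nu> \<tau>"
  shows "\<forall>k::nat\<ge>1. \<exists>s::nat. \<exists>m :: nat \<Rightarrow> 'a measure. \<exists>a :: nat \<Rightarrow> real.
           (\<forall>j<s. ergodic_meas f (m j) \<and> a j \<in> \<rat> \<and> a j > 0) \<and>
           (\<Sum>j<s. a j) = 1 \<and>
           (\<exists>\<nu>k. borel_prob \<nu>k \<and>
              (\<forall>A\<in>sets borel. emeasure \<nu>k A = (\<Sum>j<s. ennreal (a j) * emeasure (m j) A)) \<and>
              Dmet phi \<nu> \<nu>k \<le> 1 / real k) \<and>
           katok_inv f \<delta> \<epsilon> \<tau> \<le> (\<Sum>j<s. ennreal (a j) * e2ennreal (katok_erg f \<delta> \<epsilon> (m j)))"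
proof (intro allI impI)
  fix k :: nat assume k: "k \<ge> 1"
  have \<nu>: "borel_prob \<nu>" using assms(8) by (simp add: invariant_meas_def)
  obtain s :: nat and m a where ma: "\<forall>j<s. m j \<in> space (prob_algebra borel) \<and> ergodic_meas f (m j) \<and>
      a j \<in> \<rat> \<and> a j > 0" "(\<Sum>j<s. a j) = 1"
    "\<forall>i<2 * k. \<bar>integral\<^sup>L \<nu> (phi (Suc i)) - (\<Sum>j<s. a j * integral\<^sup>L (m j) (phi (Suc i)))\<bar>
       \<le> 1 / k * sup_norm (phi (Suc i))"
    "katok_inv f \<delta> \<epsilon> \<tau> \<le> (\<Sum>j<s. ennreal (a j) * e2ennreal (katok_erg f \<delta> \<epsilon> (m j)))"
    using ergodic_rational_combination_approx[where g="\<lambda>i. phi (Suc i)" and \<eta>="1 / k" and N="2 * k",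
        OF assms(1,3,5,7) _ assms(9)] \<nu> k
    by (auto simp: borel_prob_def)
  have "m j \<in> space (prob_algebra borel)" "0 \<le> a j" if "j < s" for j
    using ma(1) that by auto
  then obtain \<nu>k where \<nu>k: "borel_prob \<nu>k"
    "\<forall>A\<in>sets borel. emeasure \<nu>k A = (\<Sum>j<s. ennreal (a j) * emeasure (m j) A)"
    "\<And>g B. g \<in> borel_measurable borel \<Longrightarrow> (\<forall>x. \<bar>g x\<bar> \<le> B) \<Longrightarrow>
       integral\<^sup>L \<nu>k g = (\<Sum>j<s. a j * integral\<^sup>L (m j) g)"
    using convex_combination_measure[where m=m and s=s and a=a] ma(2) by blast
  have "Dmet phi \<nu> \<nu>k \<le> 1 / k"
  proof (rule Dmet_le_inverse[OF assms(1,3) \<nu> \<nu>k(1) k])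
    show "2 * k \<le> 2 ^ (2 * k)" by (rule less_exp[THEN less_imp_le])
    fix i assume "i < 2 * k"
    then show "\<bar>integral\<^sup>L \<nu> (phi (Suc i)) - integral\<^sup>L \<nu>k (phi (Suc i))\<bar> \<le> sup_norm (phi (Suc i)) / k"
      using ma(3) \<nu>k(3)[OF borel_measurable_continuous_onI[OF assms(3)] allI[OF abs_le_sup_norm[OF assms(1,3)]]]
      by simp
  qed
  with ma \<nu>k(1,2) show "\<exists>s::nat. \<exists>m a. (\<forall>j<s. ergodic_meas f (m j) \<and> a j \<in> \<rat> \<and> a j > 0) \<and>
      (\<Sum>j<s. a j) = 1 \<and> (\<exists>\<nu>k. borel_prob \<nu>k \<and>
        (\<forall>A\<in>sets borel. emeasure \<nu>k A = (\<Sum>j<s. ennreal (a j) * emeasure (m j) A)) \<and>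
        Dmet phi \<nu> \<nu>k \<le> 1 / real k) \<and>
      katok_inv f \<delta> \<epsilon> \<tau> \<le> (\<Sum>j<s. ennreal (a j) * e2ennreal (katok_erg f \<delta> \<epsilon> (m j)))"
    by (intro exI[of _ s] exI[of _ m] exI[of _ a] conjI exI[of _ \<nu>k]) (blast | fact)+
qed

end
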